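(* Let $[a,b]$ be a bounded closed interval and let $A:L^2(a,b)\to L^2(a,b)$ be the integral operator $(Af)(x)=\int_a^b K(x,y)f(y)\,dy$ with a real, symmetric ($K(x,y)=K(y,x)$), square-integrable kernel $K$. Assume $A$ is injective, let $\{\psi_k\}_{k\ge1}$ be an orthonormal basis of $L^2(a,b)$ of eigenfunctions of $A$ with eigenvalues $\lambda_1>\lambda_2>\lambda_3>\cdots$, $\lambda_k\to 0$. Let $\xi$ and $\zeta$ be Gaussian weak random variables in $L^2(a,b)$ with zero means, uncorrelated with each other ($R_{\xi\zeta}=0$), with covariance operators $R_{\xi\xi}$ and $R_{\zeta\zeta}=\epsilon^2 N$, where $\epsilon>0$ and $N$ is a given positive operator such that $R_{\zeta\zeta}^{-1}$ exists. Put $\eta=A\xi+\zeta$, and for each $k$ let $\xi_k=(\xi,\psi_k)$, $\zeta_k=(\zeta,\psi_k)$, $\eta_k=(\eta,\psi_k)=\lambda_k\xi_k+\zeta_k$, $\rho_k^2=(R_{\xi\xi}\psi_k,\psi_k)$, $\nu_k^2=(N\psi_k,\psi_k)>0$ (no assumption is made that the $\xi_k$, or the $\zeta_k$, are mutually uncorrelated). Define $$\mathcal I=\{k:\lambda_k\rho_k\ge \epsilon\nu_k\},\qquad \mathcal N=\{k:\lambda_k\rho_k<\epsilon\nu_k\},$$ and the operator $\widehat B$ by $\widehat B g=\sum_{k\in\mathcal I}\frac{(g,\psi_k)}{\lambda_k}\psi_k$. Then: (i) if $\lim_{k\to\infty}\lambda_k\rho_k/\nu_k=0$, the set $\mathcal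 I$ is finite for every fixed $\epsilon>0$; (ii) if, in addition to the limit in (i), $R_{\xi\xi}$ is of trace class, then $$\mathrm{E}\left\{\|\xi-\widehat B\eta\|^2\right\}=\sum_{k\in\mathcal N}\rho_k^2+\sum_{k\in\mathcal I}\frac{\epsilon^2\nu_k^2}{\lambda_k^2}<\infty .$$
   Context: A (Gaussian) weak random variable in the Hilbert space $L^2(a,b)$ is a linear map $v\mapsto(\xi,v)$ assigning to each $v\in L^2(a,b)$ a real (jointly Gaussian) random variable; it is determined by its mean element and its covariance operator $R_{\xi\xi}$, defined by $(R_{\xi\xi}u,v)=\mathrm{E}\{(\xi,u)(\xi,v)\}$ (zero mean case); $R_{\xi\zeta}$ is defined analogously with $\mathrm{E}\{(\xi,u)(\zeta,v)\}$. $(\cdot,\cdot)$ and $\|\cdot\|$ are the inner product and norm of $L^2(a,b)$, and $\mathrm{E}$ denotes expectation. *)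

theory Defs
  imports "HOL-Probability.Probability"
begin

text \<open>Elements of L2(a,b) are represented by real functions on the real line, considered
  on the interval from a to b; equalities in L2 are almost-everywhere equalities.\<close>

definition L2 :: "real \<Rightarrow> real \<Rightarrow> (real \<Rightarrow> real) \<Rightarrow> bool" where
  "L2 a b f \<longleftrightarrow> f \<in> borel_measurable (lebesgue_on {a..b})
      \<and> integrable (lebesgue_on {a..b}) (\<lambda>x. (f x)\<^sup>2)"

definition ip :: "real \<Rightarrow> real \<Rightarrow> (real \<Rightarrow> real) \<Rightarrow> (real \<Rightarrow> real) \<Rightarrow> real" where
  "ip a b f g = (LINT x | lebesgue_on {a..b}. f x * g x)"

definition L2_eq :: "real \<Rightarrow> real \<Rightarrow> (real \<Rightarrow> real) \<Rightarrow> (real \<Rightarrow> real) \<Rightarrow> bool" where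
  "L2_eq a b f g \<longleftrightarrow> (AE x in lebesgue_on {a..b}. f x = g x)"

definition sq_int_kernel :: "real \<Rightarrow> real \<Rightarrow> (real \<Rightarrow> real \<Rightarrow> real) \<Rightarrow> bool" where
  "sq_int_kernel a b K \<longleftrightarrow>
     (\<lambda>(x,y). K x y) \<in> borel_measurable (lebesgue_on ({a..b} \<times> {a..b}))
     \<and> integrable (lebesgue_on ({a..b} \<times> {a..b})) (\<lambda>(x,y). (K x y)\<^sup>2)"

definition intop :: "real \<Rightarrow> real \<Rightarrow> (real \<Rightarrow> real \<Rightarrow> real) \<Rightarrow> (real \<Rightarrow> real) \<Rightarrow> real \<Rightarrow> real" where
  "intop a b K f = (\<lambda>x. LINT y | lebesgue_on {a..b}. K x y * f y)"

definition orthonormal_basis_L2 :: "real \<Rightarrow> real \<Rightarrow> (nat \<Rightarrow> real \<Rightarrow> real) \<Rightarrow> bool" where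
  "orthonormal_basis_L2 a b \<psi> \<longleftrightarrow>
     (\<forall>k. L2 a b (\<psi> k))
     \<and> (\<forall>j k. ip a b (\<psi> j) (\<psi> k) = (if j = k then 1 else 0))
     \<and> (\<forall>f. L2 a b f \<and> (\<forall>k. ip a b f (\<psi> k) = 0) \<longrightarrow> L2_eq a b f (\<lambda>_. 0))"

definition gaussian_rv :: "'w measure \<Rightarrow> ('w \<Rightarrow> real) \<Rightarrow> bool" where
  "gaussian_rv M Y \<longleftrightarrow>
     (\<exists>\<mu>. AE \<omega> in M. Y \<omega> = \<mu>)
     \<or> (\<exists>\<mu> \<sigma>. \<sigma> > 0 \<and> distributed M lborel Y (normal_density \<mu> \<sigma>))"

text \<open>A weak random variable on L2(a,b): a linear map u \<mapsto> (X,u) into random variables,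
  compatible with a.e. equality.\<close>
definition weak_rv :: "real \<Rightarrow> real \<Rightarrow> 'w measure \<Rightarrow> ((real \<Rightarrow> real) \<Rightarrow> 'w \<Rightarrow> real) \<Rightarrow> bool" where
  "weak_rv a b M X \<longleftrightarrow>
     (\<forall>u. L2 a b u \<longrightarrow> X u \<in> borel_measurable M)
     \<and> (\<forall>u v c. L2 a b u \<and> L2 a b v \<longrightarrow>
          (AE \<omega> in M. X (\<lambda>x. u x + c * v x) \<omega> = X u \<omega> + c * X v \<omega>))
     \<and> (\<forall>u v. L2 a b u \<and> L2 a b v \<and> L2_eq a b u v \<longrightarrow> (AE \<omega> in M. X u \<omega> = X v \<omega>))"

definition gaussian_weak_rv0 :: "real \<Rightarrow> real \<Rightarrow> 'w measure \<Rightarrow> ((real \<Rightarrow> real) \<Rightarrow> 'w \<Rightarrow> real) \<Rightarrow> bool" where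
  "gaussian_weak_rv0 a b M X \<longleftrightarrow> weak_rv a b M X
     \<and> (\<forall>u. L2 a b u \<longrightarrow> gaussian_rv M (X u) \<and> prob_space.expectation M (X u) = 0)"

text \<open>Covariance (R_XY u, v) = E{(X,u)(Y,v)} for zero-mean weak random variables.\<close>
definition cov :: "'w measure \<Rightarrow> ((real \<Rightarrow> real) \<Rightarrow> 'w \<Rightarrow> real) \<Rightarrow> ((real \<Rightarrow> real) \<Rightarrow> 'w \<Rightarrow> real)
                    \<Rightarrow> (real \<Rightarrow> real) \<Rightarrow> (real \<Rightarrow> real) \<Rightarrow> real" where
  "cov M X Y u v = prob_space.expectation M (\<lambda>\<omega>. X u \<omega> * Y v \<omega>)"

text \<open>E{||X||^2} for a zero-mean weak random variable: the trace of its covariance operator,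
  computed in the orthonormal basis \<psi>.\<close>
definition weak_mean_sq_norm :: "'w measure \<Rightarrow> (nat \<Rightarrow> real \<Rightarrow> real) \<Rightarrow> ((real \<Rightarrow> real) \<Rightarrow> 'w \<Rightarrow> real) \<Rightarrow> real" where
  "weak_mean_sq_norm M \<psi> X = (\<Sum>k. cov M X X (\<psi> k) (\<psi> k))"

end

theory Submission
  imports Defs
begin

text \<open>Because the estimator inverts \<open>A\<close> exactly on the eigenvectors indexed by \<open>I\<close>, each
  eigen-component of the error involves only the corresponding components of \<open>\<xi>\<close> and \<open>\<zeta>\<close>:
  for \<open>k \<in> I\<close> it is \<open>\<xi>\<^sub>k - (\<lambda>\<^sub>k\<xi>\<^sub>k + \<zeta>\<^sub>k)/\<lambda>\<^sub>k = -\<zeta>\<^sub>k/\<lambda>\<^sub>k\<close>, with variance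
  \<open>\<epsilon>\<^sup>2\<nu>\<^sub>k\<^sup>2/\<lambda>\<^sub>k\<^sup>2\<close>, and for \<open>k \<notin> I\<close> it is \<open>\<xi>\<^sub>k\<close>, with variance \<open>\<rho>\<^sub>k\<^sup>2\<close>.
  \<open>I\<close> is finite because \<open>\<lambda>\<^sub>k\<rho>\<^sub>k/\<nu>\<^sub>k \<rightarrow> 0\<close>, so the trace of the error covariance is a
  finite sum plus a subseries of the trace of \<open>R\<^sub>\<xi>\<^sub>\<xi>\<close>.\<close>

lemma L2_zero: "L2 a b (\<lambda>_. 0)"
  unfolding L2_def by simp

lemma L2_cmult:
  assumes "L2 a b f"
  shows "L2 a b (\<lambda>x. c * f x)"
proof -
  have "integrable (lebesgue_on {a..b}) (\<lambda>x. c\<^sup>2 * (f x)\<^sup>2)"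
    using assms unfolding L2_def by (intro integrable_mult_right) auto
  moreover have "(\<lambda>x. c * f x) \<in> borel_measurable (lebesgue_on {a..b})"
    using assms unfolding L2_def by (intro borel_measurable_times) auto
  ultimately show ?thesis
    unfolding L2_def by (simp add: power_mult_distrib)
qed

lemma L2_cong_AE:
  assumes f: "L2 a b f" and fg: "L2_eq a b g f"
  shows "L2 a b g"
proof -
  have S: "{a..b} \<inter> space lebesgue \<in> sets lebesgue" by simp
  have fm: "f \<in> borel_measurable (lebesgue_on {a..b})"
    using f unfolding L2_def by simp
  then have "(\<lambda>x. indicator {a..b} x *\<^sub>R f x) \<in> borel_measurable lebesgue"
    using borel_measurable_restrict_space_iff[OF S, of f] by blast
  moreover have "AE x in lebesgue. indicator {a..b} x *\<^sub>R f x = indicator {a..b} x *\<^sub>R g x"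
  proof -
    have "AE x in lebesgue. x \<in> {a..b} \<longrightarrow> g x = f x"
      using fg unfolding L2_eq_def AE_restrict_space_iff[OF S] .
    then show ?thesis by eventually_elim (auto simp: indicator_def)
  qed
  ultimately have "(\<lambda>x. indicator {a..b} x *\<^sub>R g x) \<in> borel_measurable lebesgue"
    by (rule borel_measurable_AE)
  then have gm: "g \<in> borel_measurable (lebesgue_on {a..b})"
    using borel_measurable_restrict_space_iff[OF S, of g] by blast
  have "AE x in lebesgue_on {a..b}. (f x)\<^sup>2 = (g x)\<^sup>2"
    using fg unfolding L2_eq_def by eventually_elim simp
  then have "integrable (lebesgue_on {a..b}) (\<lambda>x. (f x)\<^sup>2)
      = integrable (lebesgue_on {a..b}) (\<lambda>x. (g x)\<^sup>2)"
    using fm gm by (intro integrable_cong_AE) auto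
  then show ?thesis
    using f gm unfolding L2_def by simp
qed

lemma weak_rv_zero:
  assumes "weak_rv a b M X"
  shows "AE \<omega> in M. X (\<lambda>_. 0) \<omega> = 0"
proof -
  have "AE \<omega> in M. X (\<lambda>x. 0 + 1 * 0) \<omega> = X (\<lambda>_. 0) \<omega> + 1 * X (\<lambda>_. 0) \<omega>"
    using assms L2_zero[of a b] unfolding weak_rv_def by blast
  then show ?thesis by eventually_elim simp
qed

lemma weak_rv_cmult:
  assumes "weak_rv a b M X" and "L2 a b v"
  shows "AE \<omega> in M. X (\<lambda>x. c * v x) \<omega> = c * X v \<omega>"
proof -
  have "AE \<omega> in M. X (\<lambda>x. 0 + c * v x) \<omega> = X (\<lambda>_. 0) \<omega> + c * X v \<omega>"
    using assms L2_zero[of a b] unfolding weak_rv_def by blast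
  with weak_rv_zero[OF assms(1)] show ?thesis by eventually_elim simp
qed

lemma weak_rv_L2_eq_cmult:
  assumes X: "weak_rv a b M X" and v: "L2 a b v" and uv: "L2_eq a b u (\<lambda>x. c * v x)"
  shows "AE \<omega> in M. X u \<omega> = c * X v \<omega>"
proof -
  have cv: "L2 a b (\<lambda>x. c * v x)"
    using v by (rule L2_cmult)
  have "AE \<omega> in M. X u \<omega> = X (\<lambda>x. c * v x) \<omega>"
    using X L2_cong_AE[OF cv uv] cv uv unfolding weak_rv_def by blast
  with weak_rv_cmult[OF X v] show ?thesis by eventually_elim simp
qed

lemma cov_self_cong_AE_cmult:
  assumes "AE \<omega> in M. X u \<omega> = c * Y v \<omega>"
    and "X u \<in> borel_measurable M" and "Y v \<in> borel_measurable M"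
  shows "cov M X X u u = c\<^sup>2 * cov M Y Y v v"
proof -
  have "cov M X X u u = (\<integral>\<omega>. c\<^sup>2 * (Y v \<omega> * Y v \<omega>) \<partial>M)"
    unfolding cov_def using assms
    by (intro integral_cong_AE) (auto elim!: eventually_mono simp: power2_eq_square)
  then show ?thesis
    unfolding cov_def by simp
qed

lemma cov_self_nonneg: "0 \<le> cov M X X u u"
  unfolding cov_def by (simp add: integral_nonneg_AE)

lemma sum_ip_orthonormal_basis:
  assumes "orthonormal_basis_L2 a b \<psi>" and "finite I"
  shows "(\<Sum>j\<in>I. c j * ip a b (\<psi> j) (\<psi> k)) = (if k \<in> I then c k else 0)"
proof -
  have "(\<Sum>j\<in>I. c j * ip a b (\<psi> j) (\<psi> k)) = (\<Sum>j\<in>I. if j = k then c j else 0)"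
    using assms(1) unfolding orthonormal_basis_L2_def by (intro sum.cong) auto
  then show ?thesis
    using assms(2) by (simp add: sum.delta')
qed

lemma truncated_inverse_error_cov:
  fixes \<xi> \<zeta> \<eta> err :: "(real \<Rightarrow> real) \<Rightarrow> 'w \<Rightarrow> real"
  assumes \<xi>: "weak_rv a b M \<xi>" and \<zeta>: "weak_rv a b M \<zeta>"
    and onb: "orthonormal_basis_L2 a b \<psi>"
    and eigen: "L2_eq a b (intop a b K (\<psi> k)) (\<lambda>x. lam k * \<psi> k x)"
    and I: "finite I" and lam_nz: "k \<in> I \<Longrightarrow> lam k \<noteq> 0"
    and \<eta>_def: "\<eta> = (\<lambda>v \<omega>. \<xi> (intop a b K v) \<omega> + \<zeta> v \<omega>)"
    and err_def: "err = (\<lambda>v \<omega>. \<xi> v \<omega> - (\<Sum>j\<in>I. \<eta> (\<psi> j) \<omega> / lam j * ip a b (\<psi> j) v))"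
  shows "cov M err err (\<psi> k) (\<psi> k)
    = (if k \<in> I then cov M \<zeta> \<zeta> (\<psi> k) (\<psi> k) / (lam k)\<^sup>2 else cov M \<xi> \<xi> (\<psi> k) (\<psi> k))"
proof -
  have \<psi>: "L2 a b (\<psi> k)"
    using onb unfolding orthonormal_basis_L2_def by simp
  have A\<psi>: "L2 a b (intop a b K (\<psi> k))"
    using L2_cong_AE[OF L2_cmult[OF \<psi>] eigen] .
  have "err (\<psi> k) \<omega> = \<xi> (\<psi> k) \<omega> - (if k \<in> I then \<eta> (\<psi> k) \<omega> / lam k else 0)" for \<omega>
    using sum_ip_orthonormal_basis[OF onb I, of "\<lambda>j. \<eta> (\<psi> j) \<omega> / lam j" k]
    unfolding err_def by simp
  then have err_\<psi>: "err (\<psi> k) = (\<lambda>\<omega>. \<xi> (\<psi> k) \<omega> - (if k \<in> I then \<eta> (\<psi> k) \<omega> / lam k else 0))"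
    by (rule ext)
  show ?thesis
  proof (cases "k \<in> I")
    case True
    have "AE \<omega> in M. \<xi> (intop a b K (\<psi> k)) \<omega> = lam k * \<xi> (\<psi> k) \<omega>"
      using weak_rv_L2_eq_cmult[OF \<xi> \<psi> eigen] .
    then have "AE \<omega> in M. err (\<psi> k) \<omega> = - 1 / lam k * \<zeta> (\<psi> k) \<omega>"
      by eventually_elim (use True lam_nz in \<open>simp add: err_\<psi> \<eta>_def field_simps\<close>)
    moreover have "\<xi> (\<psi> k) \<in> borel_measurable M" "\<xi> (intop a b K (\<psi> k)) \<in> borel_measurable M"
      "\<zeta> (\<psi> k) \<in> borel_measurable M"
      using \<xi> \<zeta> \<psi> A\<psi> unfolding weak_rv_def by auto
    ultimately have "cov M err err (\<psi> k) (\<psi> k) = (- 1 / lam k)\<^sup>2 * cov M \<zeta> \<zeta> (\<psi> k) (\<psi> k)"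
      using True by (intro cov_self_cong_AE_cmult[where X = err and Y = \<zeta>]) (simp_all add: err_\<psi> \<eta>_def)
    with True show ?thesis
      by (simp add: power_divide)
  next
    case False
    then show ?thesis
      unfolding cov_def err_\<psi> by simp
  qed
qed

lemma pos_of_strict_decseq_tendsto_0:
  fixes lam :: "nat \<Rightarrow> real"
  assumes "\<And>k. lam (Suc k) < lam k" and "lam \<longlonglongrightarrow> 0"
  shows "0 < lam k"
proof -
  have "decseq lam"
    using assms(1) by (intro decseq_SucI less_imp_le)
  then have "0 \<le> lam (Suc k)"
    using assms(2) by (rule decseq_ge)
  with assms(1)[of k] show ?thesis by simp
qed

lemma finite_ge_of_quotient_tendsto_0:
  fixes f g :: "nat \<Rightarrow> real"
  assumes "(\<lambda>k. f k / g k) \<longlonglongrightarrow> 0" and "\<And>k. 0 < g k" and "0 < e"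
  shows "finite {k. e * g k \<le> f k}"
proof -
  obtain n where n: "\<And>k. n \<le> k \<Longrightarrow> f k / g k < e"
    using order_tendstoD(2)[OF assms(1,3)] unfolding eventually_sequentially by blast
  have "{k. e * g k \<le> f k} \<subseteq> {..<n}"
  proof (rule subsetI, rule ccontr)
    fix k assume "k \<in> {k. e * g k \<le> f k}" and "k \<notin> {..<n}"
    with n[of k] assms(2)[of k] show False by (simp add: pos_divide_less_eq)
  qed
  then show ?thesis by (rule finite_subset) simp
qed

lemma sums_if_finite_set_else:
  fixes f g :: "nat \<Rightarrow> real"
  assumes "summable f" and "finite I"
  shows "(\<lambda>k. if k \<in> I then g k else f k) sums ((\<Sum>k. if k \<notin> I then f k else 0) + sum g I)"
proof -
  have "eventually (\<lambda>k. k \<notin> I) sequentially"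
    using assms(2) by (simp add: cofinite_eq_sequentially[symmetric] eventually_cofinite)
  then have "summable (\<lambda>k. if k \<notin> I then f k else 0)"
    using assms(1) by (subst summable_cong[where g = f]) (auto elim: eventually_mono)
  then have "(\<lambda>k. (if k \<notin> I then f k else 0) + (if k \<in> I then g k else 0))
      sums ((\<Sum>k. if k \<notin> I then f k else 0) + sum g I)"
    using assms(2) by (intro sums_add summable_sums sums_If_finite_set)
  then show ?thesis
    by (simp add: if_distrib cong: if_cong)
qed

theorem proposition11:
  fixes a b \<epsilon> :: real
    and K :: "real \<Rightarrow> real \<Rightarrow> real"
    and lam :: "nat \<Rightarrow> real"
    and \<psi> :: "nat \<Rightarrow> real \<Rightarrow> real"
    and M :: "'w measure"
    and \<xi> \<zeta> \<eta> err :: "(real \<Rightarrow> real) \<Rightarrow> 'w \<Rightarrow> real"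
    and N :: "(real \<Rightarrow> real) \<Rightarrow> (real \<Rightarrow> real)"
    and \<rho> \<nu> :: "nat \<Rightarrow> real"
    and I NN :: "nat set"
  assumes ab: "a < b"
    and K_sqint: "sq_int_kernel a b K"
    and K_sym: "\<And>x y. K x y = K y x"
    and A_inj: "\<And>f. L2 a b f \<Longrightarrow> L2_eq a b (intop a b K f) (\<lambda>_. 0) \<Longrightarrow> L2_eq a b f (\<lambda>_. 0)"
    and onb: "orthonormal_basis_L2 a b \<psi>"
    and eigen: "\<And>k. L2_eq a b (intop a b K (\<psi> k)) (\<lambda>x. lam k * \<psi> k x)"
    and lam_decr: "\<And>k. lam (Suc k) < lam k"
    and lam_lim: "lam \<longlonglongrightarrow> 0"
    and M_prob: "prob_space M"
    and \<xi>_gauss: "gaussian_weak_rv0 a b M \<xi>"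
    and \<zeta>_gauss: "gaussian_weak_rv0 a b M \<zeta>"
    and uncorr: "\<And>u v. L2 a b u \<Longrightarrow> L2 a b v \<Longrightarrow> cov M \<xi> \<zeta> u v = 0"
    and eps_pos: "\<epsilon> > 0"
    and N_L2: "\<And>u. L2 a b u \<Longrightarrow> L2 a b (N u)"
    and N_pos: "\<And>u. L2 a b u \<Longrightarrow> \<not> L2_eq a b u (\<lambda>_. 0) \<Longrightarrow> ip a b (N u) u > 0"
    and R_\<zeta>\<zeta>: "\<And>u v. L2 a b u \<Longrightarrow> L2 a b v \<Longrightarrow> cov M \<zeta> \<zeta> u v = \<epsilon>\<^sup>2 * ip a b (N u) v"
    and \<eta>_def: "\<eta> = (\<lambda>v \<omega>. \<xi> (intop a b K v) \<omega> + \<zeta> v \<omega>)"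
    and \<rho>_def: "\<rho> = (\<lambda>k. sqrt (cov M \<xi> \<xi> (\<psi> k) (\<psi> k)))"
    and \<nu>_def: "\<nu> = (\<lambda>k. sqrt (ip a b (N (\<psi> k)) (\<psi> k)))"
    and \<nu>_pos: "\<And>k. ip a b (N (\<psi> k)) (\<psi> k) > 0"
    and I_def: "I = {k. lam k * \<rho> k \<ge> \<epsilon> * \<nu> k}"
    and NN_def: "NN = {k. lam k * \<rho> k < \<epsilon> * \<nu> k}"
    and err_def: "err = (\<lambda>v \<omega>. \<xi> v \<omega> - (\<Sum>k\<in>I. \<eta> (\<psi> k) \<omega> / lam k * ip a b (\<psi> k) v))"
  shows "((\<lambda>k. lam k * \<rho> k / \<nu> k) \<longlonglongrightarrow> 0 \<longrightarrow>
            (\<forall>e>0. finite {k. lam k * \<rho> k \<ge> e * \<nu> k}))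
       \<and> ((\<lambda>k. lam k * \<rho> k / \<nu> k) \<longlonglongrightarrow> 0 \<and> summable (\<lambda>k. cov M \<xi> \<xi> (\<psi> k) (\<psi> k)) \<longrightarrow>
            summable (\<lambda>k. cov M err err (\<psi> k) (\<psi> k))
            \<and> weak_mean_sq_norm M \<psi> err
                = (\<Sum>k. if k \<in> NN then (\<rho> k)\<^sup>2 else 0) + (\<Sum>k\<in>I. \<epsilon>\<^sup>2 * (\<nu> k)\<^sup>2 / (lam k)\<^sup>2))"
proof (intro conjI impI allI; (elim conjE)?)
  show finite: "finite {k. lam k * \<rho> k \<ge> e * \<nu> k}"
    if "(\<lambda>k. lam k * \<rho> k / \<nu> k) \<longlonglongrightarrow> 0" and "e > 0" for e
    using finite_ge_of_quotient_tendsto_0[OF that(1) _ that(2)] \<nu>_pos unfolding \<nu>_def by simp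
  assume lim: "(\<lambda>k. lam k * \<rho> k / \<nu> k) \<longlonglongrightarrow> 0"
    and trace: "summable (\<lambda>k. cov M \<xi> \<xi> (\<psi> k) (\<psi> k))"
  have "finite I"
    unfolding I_def using finite[OF lim eps_pos] .
  moreover have "cov M err err (\<psi> k) (\<psi> k)
      = (if k \<in> I then \<epsilon>\<^sup>2 * (\<nu> k)\<^sup>2 / (lam k)\<^sup>2 else cov M \<xi> \<xi> (\<psi> k) (\<psi> k))" for k
    using truncated_inverse_error_cov[OF _ _ onb eigen \<open>finite I\<close> _ \<eta>_def err_def]
      \<xi>_gauss \<zeta>_gauss pos_of_strict_decseq_tendsto_0[OF lam_decr lam_lim, of k]
      R_\<zeta>\<zeta> onb \<nu>_pos[of k]
    unfolding gaussian_weak_rv0_def orthonormal_basis_L2_def \<nu>_def by simp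
  moreover have "NN = - I"
    unfolding NN_def I_def by auto
  ultimately have "(\<lambda>k. cov M err err (\<psi> k) (\<psi> k))
      sums ((\<Sum>k. if k \<in> NN then (\<rho> k)\<^sup>2 else 0) + (\<Sum>k\<in>I. \<epsilon>\<^sup>2 * (\<nu> k)\<^sup>2 / (lam k)\<^sup>2))"
    unfolding \<rho>_def real_sqrt_pow2[OF cov_self_nonneg]
    using sums_if_finite_set_else[OF trace \<open>finite I\<close>, of "\<lambda>k. \<epsilon>\<^sup>2 * (\<nu> k)\<^sup>2 / (lam k)\<^sup>2"]
    by (simp only: Compl_iff)
  then show "summable (\<lambda>k. cov M err err (\<psi> k) (\<psi> k))"
    and "weak_mean_sq_norm M \<psi> err
      = (\<Sum>k. if k \<in> NN then (\<rho> k)\<^sup>2 else 0) + (\<Sum>k\<in>I. \<epsilon>\<^sup>2 * (\<nu> k)\<^sup>2 / (lam k)\<^sup>2)"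
    unfolding weak_mean_sq_norm_def by (auto simp: sums_iff)
qed

end
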